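(* Let $f:\mathbb{C}^2\times\mathbb{R}\to\mathbb{C}$ be such that $f(\cdot,t)$ is holomorphic for each $t$, and $f$ is of class $C^3$ jointly in $(\operatorname{Re}Z,\operatorname{Im}Z,t)$. Let $\mathcal{V}:[0,\infty)\to\mathbb{C}^2$ be continuously differentiable, $Z_0\in\mathbb{C}^2$, $s\in\{s^+,s^-\}$. For $\varepsilon>0$ and integers $n\ge0$ define $$Y_\varepsilon(n\varepsilon)=\frac14\sum_{j=1}^4 f\big(Z^j_\varepsilon(n\varepsilon),n\varepsilon\big).$$ Then for every $T>0$ there is $C$ such that for all $\varepsilon\in(0,1]$ and all integers $q\ge1$ with $4q\varepsilon\le T$, setting $t=4q\varepsilon$, $$\Big|Y_\varepsilon(t)-Y_\varepsilon(t-\varepsilon)-\varepsilon\,(Df)\big(\widetilde Z_\varepsilon(t),t\big)\Big|\le C\varepsilon^2,$$ where $D$ is the complex Dynkin operator $D f=\frac{\partial f}{\partial t}+\mathcal{V}(t)\cdot\nabla f-i\frac{\hbar}{2m}\Delta f$. The same holds with $\widetilde Z_\varepsilon(t)$ replaced by the classical trajectory $\widetilde Z(t)$ solving $\dot{\widetilde Z}=\mathcal{V}$, $\widetilde Z(0)=Z_0$.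
   Context: Fix constants $\hbar>0$, $m>0$. In $\mathbb{R}^2$ let $u^1=(1,1)$, $u^2=(1,-1)$, $u^3=(-1,-1)$, $u^4=(-1,1)$. Let $s^+$ be the cyclic permutation $u^1\mapsto u^2\mapsto u^3\mapsto u^4\mapsto u^1$ and $s^-=(s^+)^{-1}$; $s^k$ denotes the $k$-th iterate. For $\varepsilon>0$ put $\gamma=(1+i)\sqrt{\hbar\varepsilon/(4m)}$. Given $\mathcal{V}$ and $Z_0$, define $Z^j_\varepsilon(0)=Z_0$ and for $n\ge1$, $n=4q+r$ ($0\le r\le3$): $Z^j_\varepsilon(n\varepsilon)=Z^j_\varepsilon((n-1)\varepsilon)+\mathcal{V}(4q\varepsilon)\varepsilon+\gamma(s^nu^j-s^{n-1}u^j)$, $j=1,\dots,4$; and $\widetilde Z_\varepsilon(0)=Z_0$, $\widetilde Z_\varepsilon(n\varepsilon)=\widetilde Z_\varepsilon((n-1)\varepsilon)+\mathcal{V}(4q\varepsilon)\varepsilon$. For a function holomorphic in $Z=(z_1,z_2)$: $\nabla f=(\partial f/\partial z_1,\partial f/\partial z_2)$ (complex derivatives), $\Delta f=\partial^2 f/\partial z_1^2+\partial^2 f/\partial z_2^2$, and for $a,b\in\mathbb{C}^2$, $a\cdot b=a_1b_1+a_2b_2$ (no conjugation). *)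

theory Defs
  imports "HOL-Analysis.Analysis"
begin

definition u :: "nat \<Rightarrow> real \<times> real" where
  "u j = (if j = 1 then (1, 1) else if j = 2 then (1, -1)
          else if j = 3 then (-1, -1) else (-1, 1))"

definition splus :: "real \<times> real \<Rightarrow> real \<times> real" where
  "splus x = (if x = u 1 then u 2 else if x = u 2 then u 3
              else if x = u 3 then u 4 else if x = u 4 then u 1 else x)"

definition sminus :: "real \<times> real \<Rightarrow> real \<times> real" where
  "sminus = inv splus"

definition gam :: "real \<Rightarrow> real \<Rightarrow> real \<Rightarrow> complex" where
  "gam hbar m eps = (1 + \<i>) * complex_of_real (sqrt (hbar * eps / (4 * m)))"

definition cscale :: "complex \<Rightarrow> real \<times> real \<Rightarrow> complex \<times> complex" where
  "cscale c x = (c * complex_of_real (fst x), c * complex_of_real (snd x))"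

text \<open>Zeps ... j n is Z^j_eps(n eps).\<close>
primrec Zeps :: "real \<Rightarrow> real \<Rightarrow> (real \<Rightarrow> complex \<times> complex) \<Rightarrow> complex \<times> complex
    \<Rightarrow> (real \<times> real \<Rightarrow> real \<times> real) \<Rightarrow> real \<Rightarrow> nat \<Rightarrow> nat \<Rightarrow> complex \<times> complex" where
  "Zeps hbar m V Z0 s eps j 0 = Z0"
| "Zeps hbar m V Z0 s eps j (Suc n) =
     Zeps hbar m V Z0 s eps j n + eps *\<^sub>R V (real (4 * (Suc n div 4)) * eps)
     + cscale (gam hbar m eps) ((s ^^ Suc n) (u j) - (s ^^ n) (u j))"

text \<open>Ztil V Z0 eps n is the tilde-Z_eps(n eps).\<close>
primrec Ztil :: "(real \<Rightarrow> complex \<times> complex) \<Rightarrow> complex \<times> complex \<Rightarrow> real \<Rightarrow> nat \<Rightarrow> complex \<times> complex" where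
  "Ztil V Z0 eps 0 = Z0"
| "Ztil V Z0 eps (Suc n) = Ztil V Z0 eps n + eps *\<^sub>R V (real (4 * (Suc n div 4)) * eps)"

definition Yeps :: "real \<Rightarrow> real \<Rightarrow> (real \<Rightarrow> complex \<times> complex) \<Rightarrow> complex \<times> complex
    \<Rightarrow> (real \<times> real \<Rightarrow> real \<times> real) \<Rightarrow> ((complex \<times> complex) \<times> real \<Rightarrow> complex)
    \<Rightarrow> real \<Rightarrow> nat \<Rightarrow> complex" where
  "Yeps hbar m V Z0 s f eps n =
     (1/4) * (\<Sum>j\<in>{1..4}. f (Zeps hbar m V Z0 s eps j n, real n * eps))"

text \<open>f(., t) holomorphic on C^2: complex-Frechet differentiable (C-linear differential).\<close>
definition holo2 :: "(complex \<times> complex \<Rightarrow> complex) \<Rightarrow> bool" where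
  "holo2 g \<longleftrightarrow> (\<forall>Z. \<exists>D1 D2. (g has_derivative (\<lambda>h. D1 * fst h + D2 * snd h)) (at Z))"

definition C3 :: "('a::real_normed_vector \<Rightarrow> 'b::real_normed_vector) \<Rightarrow> bool" where
  "C3 g \<longleftrightarrow> (\<exists>(g1 :: 'a \<Rightarrow> 'a \<Rightarrow>\<^sub>L 'b) (g2 :: 'a \<Rightarrow> 'a \<Rightarrow>\<^sub>L ('a \<Rightarrow>\<^sub>L 'b))
      (g3 :: 'a \<Rightarrow> 'a \<Rightarrow>\<^sub>L ('a \<Rightarrow>\<^sub>L ('a \<Rightarrow>\<^sub>L 'b))).
      (\<forall>x. (g has_derivative blinfun_apply (g1 x)) (at x)) \<and>
      (\<forall>x. (g1 has_derivative blinfun_apply (g2 x)) (at x)) \<and>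
      (\<forall>x. (g2 has_derivative blinfun_apply (g3 x)) (at x)) \<and>
      continuous_on UNIV g3)"

definition d1 :: "((complex \<times> complex) \<times> real \<Rightarrow> complex) \<Rightarrow> complex \<times> complex \<Rightarrow> real \<Rightarrow> complex" where
  "d1 f Z t = deriv (\<lambda>w. f ((w, snd Z), t)) (fst Z)"

definition d2 :: "((complex \<times> complex) \<times> real \<Rightarrow> complex) \<Rightarrow> complex \<times> complex \<Rightarrow> real \<Rightarrow> complex" where
  "d2 f Z t = deriv (\<lambda>w. f ((fst Z, w), t)) (snd Z)"

definition d11 :: "((complex \<times> complex) \<times> real \<Rightarrow> complex) \<Rightarrow> complex \<times> complex \<Rightarrow> real \<Rightarrow> complex" where
  "d11 f Z t = deriv (\<lambda>w. deriv (\<lambda>w'. f ((w', snd Z), t)) w) (fst Z)"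

definition d22 :: "((complex \<times> complex) \<times> real \<Rightarrow> complex) \<Rightarrow> complex \<times> complex \<Rightarrow> real \<Rightarrow> complex" where
  "d22 f Z t = deriv (\<lambda>w. deriv (\<lambda>w'. f ((fst Z, w'), t)) w) (snd Z)"

definition dt :: "((complex \<times> complex) \<times> real \<Rightarrow> complex) \<Rightarrow> complex \<times> complex \<Rightarrow> real \<Rightarrow> complex" where
  "dt f Z t = vector_derivative (\<lambda>\<tau>. f (Z, \<tau>)) (at t)"

definition Dyn :: "real \<Rightarrow> real \<Rightarrow> (real \<Rightarrow> complex \<times> complex)
    \<Rightarrow> ((complex \<times> complex) \<times> real \<Rightarrow> complex) \<Rightarrow> complex \<times> complex \<Rightarrow> real \<Rightarrow> complex" where
  "Dyn hbar m V f Z t = dt f Z t + (fst (V t) * d1 f Z t + snd (V t) * d2 f Z t)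
     - \<i> * complex_of_real (hbar / (2 * m)) * (d11 f Z t + d22 f Z t)"

end

theory Submission
  imports Defs "HOL-Complex_Analysis.Complex_Analysis"
begin

(*
  After 4q steps the rotation s has come full circle, so all four walkers sit at
  Z~(t), t = 4q eps; one step earlier they sit at the four points W +- 2 gamma e_k with
  W = Z~(t) - eps V(t).  Since (2 gamma)^2 = 4 i kappa eps, kappa = hbar / (2 m), Taylor
  expansion of the holomorphic slices of f(., t - eps) to fourth order (Cauchy estimates)
  shows that their average is f(W, t - eps) + i kappa eps Laplace f + O(eps^2), while the
  first-order expansion from (Z~(t), t) back to (W, t - eps) contributes
  eps (d_t f + V . grad f) + O(eps^2).  The constants are uniform because every point
  involved stays in a fixed compact set.  For the classical trajectory Z, the Euler
  scheme Z~ stays within O(eps) of Z and D f is Lipschitz in Z on compact sets.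
*)

lemma continuous_on_compact_norm_bound:
  fixes g :: "'a::topological_space \<Rightarrow> 'b::real_normed_vector"
  assumes "compact S" and "continuous_on S g"
  obtains B where "0 \<le> B" and "\<And>x. x \<in> S \<Longrightarrow> norm (g x) \<le> B"
  using compact_imp_bounded[OF compact_continuous_image[OF assms(2,1)]] unfolding bounded_pos
  by (auto intro: less_imp_le)

lemma bounded_derivative_lipschitz:
  fixes G :: "'a::real_normed_vector \<Rightarrow> 'b::real_normed_vector"
  assumes "convex S"
    and "\<And>x. x \<in> S \<Longrightarrow> (G has_derivative blinfun_apply (G' x)) (at x within S)"
    and "\<And>x. x \<in> S \<Longrightarrow> norm (G' x) \<le> B"
    and "x \<in> S" "y \<in> S"
  shows "norm (G y - G x) \<le> B * norm (y - x)"
  using differentiable_bound[OF assms(1), of G "\<lambda>x. blinfun_apply (G' x)" B y x] assms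
  by (simp add: norm_blinfun.rep_eq[symmetric])

lemma first_order_taylor_bound:
  fixes F :: "'a::real_normed_vector \<Rightarrow> 'b::real_normed_vector"
  assumes S: "convex S"
    and DF: "\<And>x. x \<in> S \<Longrightarrow> (F has_derivative blinfun_apply (F' x)) (at x within S)"
    and D2F: "\<And>x. x \<in> S \<Longrightarrow> (F' has_derivative blinfun_apply (F'' x)) (at x within S)"
    and B: "\<And>x. x \<in> S \<Longrightarrow> norm (F'' x) \<le> B" and x: "x \<in> S" and y: "y \<in> S"
  shows "norm (F y - F x - F' x (y - x)) \<le> B * norm (y - x) ^ 2"
proof -
  have seg: "closed_segment x y \<subseteq> S" using S x y by (simp add: closed_segment_subset)
  have "norm (F y - F x - F' x (y - x)) \<le> norm (y - x) * (B * norm (y - x))"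
  proof (rule differentiable_bound_linearization[where S = "closed_segment x y" and ?x0.0 = x])
    show "x + t *\<^sub>R (y - x) \<in> closed_segment x y" if "t \<in> {0..1}" for t
      using that by (auto simp: in_segment algebra_simps)
    fix z assume z: "z \<in> closed_segment x y"
    show "(F has_derivative blinfun_apply (F' z)) (at z within closed_segment x y)"
      using DF seg z by (auto intro: has_derivative_subset)
    have "onorm (blinfun_apply (F' z) - blinfun_apply (F' x)) = norm (F' z - F' x)"
      by (simp add: norm_blinfun.rep_eq minus_blinfun.rep_eq fun_diff_def)
    also have "\<dots> \<le> B * norm (z - x)"
      using bounded_derivative_lipschitz[OF S D2F B x] seg z by blast
    also have "\<dots> \<le> B * norm (y - x)"
      using segment_bound[OF z] order_trans[OF norm_ge_zero B[OF x]]
      by (intro mult_left_mono) (auto simp: norm_minus_commute)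
    finally show "onorm (blinfun_apply (F' z) - blinfun_apply (F' x)) \<le> B * norm (y - x)" .
  qed (use x in auto)
  then show ?thesis by (simp add: power2_eq_square mult_ac)
qed

lemma entire_fourth_deriv_bound:
  fixes \<psi> :: "complex \<Rightarrow> complex"
  assumes hol: "\<psi> holomorphic_on UNIV" and M: "\<And>w. w \<in> ball x 1 \<Longrightarrow> cmod (\<psi> w) \<le> M"
  shows "cmod ((deriv ^^ 4) \<psi> x) \<le> 24 * (M + 1)"
proof -
  have "cmod ((deriv ^^ 4) \<psi> x) \<le> fact 4 * (M + 1) / 1 ^ 4"
  proof (rule Cauchy_higher_deriv_bound[where y = 0])
    show "\<psi> holomorphic_on ball x 1"
      using hol by (rule holomorphic_on_subset) auto
    show "continuous_on (cball x 1) \<psi>"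
      using hol holomorphic_on_imp_continuous_on continuous_on_subset by blast
    show "\<psi> w \<in> ball 0 (M + 1)" if "w \<in> ball x 1" for w
      using M[OF that] by simp
  qed auto
  then show ?thesis by (simp add: fact_numeral)
qed

lemma entire_second_difference_bound:
  fixes \<psi> :: "complex \<Rightarrow> complex"
  assumes hol: "\<psi> holomorphic_on UNIV" and M: "\<And>w. cmod (w - w0) \<le> r + 1 \<Longrightarrow> cmod (\<psi> w) \<le> M"
    and c: "cmod c \<le> r"
  shows "cmod (\<psi> (w0 + c) + \<psi> (w0 - c) - 2 * \<psi> w0 - c\<^sup>2 * deriv (deriv \<psi>) w0)
    \<le> 8 * (M + 1) * cmod c ^ 4"
proof -
  let ?S = "cball w0 r"
  have B4: "cmod ((deriv ^^ Suc 3) \<psi> x) \<le> 24 * (M + 1)" if x: "x \<in> ?S" for x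
  proof -
    have "cmod (w - w0) \<le> r + 1" if "w \<in> ball x 1" for w
    proof -
      have "cmod (w - w0) \<le> cmod (w - x) + cmod (x - w0)"
        using norm_triangle_ineq[of "w - x" "x - w0"] by simp
      also have "\<dots> \<le> r + 1"
        using that x by (auto simp: dist_norm norm_minus_commute)
      finally show ?thesis .
    qed
    then show ?thesis
      using entire_fourth_deriv_bound[OF hol, of x M] M by (simp add: numeral_eq_Suc)
  qed
  have taylor: "cmod ((deriv ^^ 0) \<psi> z - (\<Sum>i\<le>3. (deriv ^^ i) \<psi> w0 * (z - w0) ^ i / fact i))
       \<le> 24 * (M + 1) * cmod (z - w0) ^ Suc 3 / fact 3" if z: "z \<in> ?S" for z
  proof (rule complex_Taylor[where f = "\<lambda>i. (deriv ^^ i) \<psi>"])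
    show "convex ?S" by simp
    show "w0 \<in> ?S" using c norm_ge_zero[of c] by (simp del: norm_ge_zero)
    show "z \<in> ?S" by (rule z)
    show "\<And>x. x \<in> ?S \<Longrightarrow> cmod ((deriv ^^ Suc 3) \<psi> x) \<le> 24 * (M + 1)" by (rule B4)
    fix i :: nat and x assume "x \<in> ?S" "i \<le> 3"
    have "((deriv ^^ i) \<psi> has_field_derivative deriv ((deriv ^^ i) \<psi>) x) (at x within ?S)"
      by (rule holomorphic_derivI[of _ UNIV]) (auto intro: holomorphic_higher_deriv hol)
    then show "((deriv ^^ i) \<psi> has_field_derivative (deriv ^^ Suc i) \<psi> x) (at x within ?S)"
      by simp
  qed
  define d3 where "d3 = (deriv ^^ 3) \<psi> w0"
  have e1: "cmod (\<psi> (w0 + c) - (\<psi> w0 + deriv \<psi> w0 * c + deriv (deriv \<psi>) w0 * c\<^sup>2 / 2 + d3 * c ^ 3 / 6))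
      \<le> 4 * (M + 1) * cmod c ^ 4"
    using taylor[of "w0 + c"] c by (simp add: d3_def dist_norm eval_nat_numeral fact_numeral field_simps)
  have e2: "cmod (\<psi> (w0 - c) - (\<psi> w0 - deriv \<psi> w0 * c + deriv (deriv \<psi>) w0 * c\<^sup>2 / 2 - d3 * c ^ 3 / 6))
      \<le> 4 * (M + 1) * cmod c ^ 4"
    using taylor[of "w0 - c"] c by (simp add: d3_def dist_norm eval_nat_numeral fact_numeral field_simps)
  have "\<psi> (w0 + c) + \<psi> (w0 - c) - 2 * \<psi> w0 - c\<^sup>2 * deriv (deriv \<psi>) w0
      = (\<psi> (w0 + c) - (\<psi> w0 + deriv \<psi> w0 * c + deriv (deriv \<psi>) w0 * c\<^sup>2 / 2 + d3 * c ^ 3 / 6))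
      + (\<psi> (w0 - c) - (\<psi> w0 - deriv \<psi> w0 * c + deriv (deriv \<psi>) w0 * c\<^sup>2 / 2 - d3 * c ^ 3 / 6))"
    by (simp add: field_simps)
  also have "cmod \<dots> \<le> 4 * (M + 1) * cmod c ^ 4 + 4 * (M + 1) * cmod c ^ 4"
    by (rule order_trans[OF norm_triangle_ineq add_mono[OF e1 e2]])
  finally show ?thesis by (simp add: algebra_simps)
qed

lemma deriv_comp_eq_blinfun:
  fixes f :: "'a::real_normed_vector \<Rightarrow> complex"
  assumes "(f has_derivative blinfun_apply (Df (\<iota> w))) (at (\<iota> w))"
    and "(\<iota> has_derivative L) (at w)" and "(f \<circ> \<iota>) field_differentiable (at w)"
  shows "deriv (f \<circ> \<iota>) w = Df (\<iota> w) (L 1)"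
proof -
  have "(\<lambda>h. deriv (f \<circ> \<iota>) w * h) = (\<lambda>h. Df (\<iota> w) (L h))"
  proof (rule has_derivative_unique)
    show "(f \<circ> \<iota> has_derivative (\<lambda>h. deriv (f \<circ> \<iota>) w * h)) (at w)"
      using assms(3) DERIV_deriv_iff_field_differentiable has_field_derivative_def by blast
    show "(f \<circ> \<iota> has_derivative (\<lambda>h. Df (\<iota> w) (L h))) (at w)"
      using has_derivative_compose[OF assms(2,1)] by (simp add: o_def)
  qed
  from fun_cong[OF this, of 1] show ?thesis by simp
qed

lemma deriv_deriv_comp_eq_blinfun:
  fixes f :: "'a::real_normed_vector \<Rightarrow> complex"
  assumes Df: "\<And>x. (f has_derivative blinfun_apply (Df x)) (at x)"
    and D2f: "\<And>x. (Df has_derivative blinfun_apply (D2f x)) (at x)"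
    and \<iota>: "\<And>w. (\<iota> has_derivative L) (at w)" and hol: "(f \<circ> \<iota>) holomorphic_on UNIV"
  shows "deriv (deriv (f \<circ> \<iota>)) w = D2f (\<iota> w) (L 1) (L 1)"
proof -
  have deriv1: "deriv (f \<circ> \<iota>) = (\<lambda>w. Df (\<iota> w) (L 1))"
  proof
    fix w
    show "deriv (f \<circ> \<iota>) w = Df (\<iota> w) (L 1)"
      using hol by (intro deriv_comp_eq_blinfun[of f Df \<iota> w L] Df \<iota>)
        (auto simp: holomorphic_on_def field_differentiable_at_within)
  qed
  have "(\<lambda>w. Df (\<iota> w) (L 1)) holomorphic_on UNIV"
    unfolding deriv1[symmetric] by (rule holomorphic_deriv[OF hol]) simp
  then have "((\<lambda>w. Df (\<iota> w) (L 1)) has_derivative (\<lambda>h. deriv (deriv (f \<circ> \<iota>)) w * h)) (at w)"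
    unfolding deriv1 has_field_derivative_def[symmetric]
    by (intro holomorphic_derivI[of _ UNIV]) auto
  moreover have "((\<lambda>w. Df (\<iota> w) (L 1)) has_derivative (\<lambda>h. D2f (\<iota> w) (L h) (L 1))) (at w)"
    using blinfun.FDERIV[OF has_derivative_compose[OF \<iota> D2f] has_derivative_const[of "L 1"]]
    by (simp add: o_def)
  ultimately have "(\<lambda>h. deriv (deriv (f \<circ> \<iota>)) w * h) = (\<lambda>h. D2f (\<iota> w) (L h) (L 1))"
    by (rule has_derivative_unique)
  from fun_cong[OF this, of 1] show ?thesis by simp
qed

section \<open>The four walkers\<close>

lemma splus_vals: "splus (1, 1) = (1, -1)" "splus (1, -1) = (-1, -1)"
  "splus (-1, -1) = (-1, 1)" "splus (-1, 1) = (1, 1)"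
  by (simp_all add: splus_def u_def)

lemma inj_splus: "inj splus"
  unfolding splus_def u_def inj_def by (auto split: if_splits)

lemma sminus_vals: "sminus (1, -1) = (1, 1)" "sminus (-1, -1) = (1, -1)"
  "sminus (-1, 1) = (-1, -1)" "sminus (1, 1) = (-1, 1)"
  unfolding sminus_def using splus_vals by (auto intro!: inv_f_eq[OF inj_splus])

lemma rotation_period_4:
  assumes "s \<in> {splus, sminus}" and "j \<in> {1..4}"
  shows "(s ^^ 4) (u j) = u j"
proof -
  have "j = 1 \<or> j = 2 \<or> j = 3 \<or> j = 4"
    using assms(2) by auto
  then show ?thesis
    using assms(1) by (auto simp: u_def eval_nat_numeral splus_vals sminus_vals)
qed

lemma cscale_diff: "cscale c (x - y) = cscale c x - cscale c y"
  by (simp add: cscale_def algebra_simps)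

lemma cscale_zero: "cscale c 0 = 0"
  by (simp add: cscale_def prod_eq_iff)

lemma Zeps_eq_Ztil:
  "Zeps hbar m V Z0 s eps j n = Ztil V Z0 eps n + cscale (gam hbar m eps) ((s ^^ n) (u j) - u j)"
proof (induction n)
  case 0
  then show ?case by (simp add: cscale_zero)
next
  case (Suc n)
  then show ?case by (simp add: cscale_diff algebra_simps)
qed

lemma Yeps_multiple_of_4:
  assumes "s \<in> {splus, sminus}"
  shows "Yeps hbar m V Z0 s f eps (4 * q) = f (Ztil V Z0 eps (4 * q), real (4 * q) * eps)"
proof -
  have "Zeps hbar m V Z0 s eps j (4 * q) = Ztil V Z0 eps (4 * q)" if "j \<in> {1..4}" for j
    using funpow_mod_eq[OF rotation_period_4[OF assms that], of "4 * q", symmetric]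
    by (simp add: Zeps_eq_Ztil cscale_zero)
  then show ?thesis by (simp add: Yeps_def)
qed

lemma rotation_displacements_sum:
  assumes "s \<in> {splus, sminus}"
  shows "(\<Sum>j\<in>{1..4}. F (W + cscale g ((s ^^ 3) (u j) - u j)))
    = F (fst W + 2 * g, snd W) + F (fst W - 2 * g, snd W) + F (fst W, snd W + 2 * g) + F (fst W, snd W - 2 * g)"
proof -
  have "{1..4::nat} = {1, 2, 3, 4}" by auto
  moreover have "(s ^^ 3) x = s (s (s x))" for x
    by (simp add: eval_nat_numeral)
  moreover have "W + (a, b) = (fst W + a, snd W + b)" for a b
    by (simp add: prod_eq_iff)
  ultimately show ?thesis
    using assms by (auto simp: u_def splus_vals sminus_vals cscale_def algebra_simps)
qed

lemma Yeps_before_multiple_of_4: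
  assumes s: "s \<in> {splus, sminus}" and q: "q \<ge> 1"
    and W: "W = Ztil V Z0 eps (4 * q - 1)" and c: "c = 2 * gam hbar m eps"
  shows "Yeps hbar m V Z0 s f eps (4 * q - 1) = 1/4 * (f ((fst W + c, snd W), real (4 * q - 1) * eps)
    + f ((fst W - c, snd W), real (4 * q - 1) * eps) + f ((fst W, snd W + c), real (4 * q - 1) * eps)
    + f ((fst W, snd W - c), real (4 * q - 1) * eps))"
proof -
  have "4 * q - 1 = 3 + 4 * (q - 1)" using q by simp
  then have "(4 * q - 1) mod 4 = 3" by simp
  then have "(s ^^ (4 * q - 1)) (u j) = (s ^^ 3) (u j)" if "j \<in> {1..4}" for j
    using funpow_mod_eq[OF rotation_period_4[OF s that], of "4 * q - 1", symmetric] by simp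
  then have "Yeps hbar m V Z0 s f eps (4 * q - 1) = 1/4 * (\<Sum>j\<in>{1..4}.
      f (W + cscale (gam hbar m eps) ((s ^^ 3) (u j) - u j), real (4 * q - 1) * eps))"
    by (simp add: Yeps_def Zeps_eq_Ztil W)
  then show ?thesis
    using rotation_displacements_sum[OF s, of "\<lambda>Y. f (Y, real (4 * q - 1) * eps)" W "gam hbar m eps"]
    by (simp add: c)
qed

lemma gam_square:
  assumes "hbar > 0" "m > 0" "eps \<ge> 0"
  shows "(2 * gam hbar m eps)\<^sup>2 = 4 * \<i> * complex_of_real (hbar / (2 * m)) * complex_of_real eps"
proof -
  have "(sqrt (hbar * eps / (4 * m)))\<^sup>2 = hbar * eps / (4 * m)"
    using assms by simp
  then have "(2 * gam hbar m eps)\<^sup>2 = 4 * (1 + \<i>)\<^sup>2 * complex_of_real (hbar * eps / (4 * m))"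
    by (simp add: gam_def power_mult_distrib flip: of_real_power)
  also have "(1 + \<i>)\<^sup>2 = 2 * \<i>"
    by (simp add: power2_eq_square algebra_simps)
  also have "hbar * eps / (4 * m) = hbar / (2 * m) * eps / 2"
    by simp
  finally show ?thesis
    by simp
qed

lemma norm_gam:
  assumes "hbar > 0" "m > 0" "eps \<ge> 0"
  shows "cmod (gam hbar m eps) = sqrt (hbar * eps / (2 * m))"
proof -
  have "cmod (1 + \<i>) = sqrt 2"
    by (simp add: cmod_def)
  then have "cmod (gam hbar m eps) = sqrt 2 * sqrt (hbar * eps / (4 * m))"
    using assms by (simp add: gam_def norm_mult)
  also have "\<dots> = sqrt (hbar * eps / (2 * m))"
    by (simp flip: real_sqrt_mult)
  finally show ?thesis .
qed

lemma norm_two_gam_le: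
  assumes "hbar > 0" "m > 0" "0 \<le> eps" "eps \<le> 1"
  shows "cmod (2 * gam hbar m eps) \<le> 2 * sqrt (hbar / (2 * m))"
proof -
  have "hbar * eps / (2 * m) \<le> hbar / (2 * m)"
    using assms by (simp add: divide_right_mono mult_left_le)
  then show ?thesis
    using norm_gam[OF assms(1-3)] by (simp add: norm_mult)
qed

section \<open>The Euler scheme and the classical trajectory\<close>

lemma frozen_time_bounds:
  assumes "0 \<le> eps"
  shows "real (4 * (Suc n div 4)) * eps \<le> real (Suc n) * eps"
    and "real (Suc n) * eps \<le> real (4 * (Suc n div 4)) * eps + 3 * eps"
proof -
  have "4 * (Suc n div 4) \<le> Suc n" "Suc n \<le> 4 * (Suc n div 4) + 3"
    by linarith+
  then have "real (4 * (Suc n div 4)) \<le> real (Suc n)" "real (Suc n) \<le> real (4 * (Suc n div 4) + 3)"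
    by (simp_all only: of_nat_le_iff)
  then show "real (4 * (Suc n div 4)) * eps \<le> real (Suc n) * eps"
    and "real (Suc n) * eps \<le> real (4 * (Suc n div 4)) * eps + 3 * eps"
    using mult_right_mono assms by (fastforce simp: distrib_right)+
qed

lemma Ztil_norm_bound:
  assumes eps: "0 < eps" and V: "\<forall>\<tau>\<in>{0..T}. norm (V \<tau>) \<le> MV"
  shows "real n * eps \<le> T \<Longrightarrow> norm (Ztil V Z0 eps n) \<le> norm Z0 + real n * eps * MV"
proof (induction n)
  case 0
  then show ?case by simp
next
  case (Suc n)
  have "real (4 * (Suc n div 4)) * eps \<le> T"
    using frozen_time_bounds(1)[of eps n] eps Suc.prems by linarith
  then have "real (4 * (Suc n div 4)) * eps \<in> {0..T}"
    using eps by simp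
  then have "norm (Ztil V Z0 eps (Suc n)) \<le> norm (Ztil V Z0 eps n) + eps * MV"
    using norm_triangle_ineq V eps by (simp add: order_trans[OF norm_triangle_ineq] mult_left_mono)
  also have "\<dots> \<le> norm Z0 + real (Suc n) * eps * MV"
    using Suc eps by (simp add: algebra_simps)
  finally show ?case .
qed

lemma Ztil_norm_le:
  assumes "0 < eps" and "0 \<le> MV" and "\<forall>\<tau>\<in>{0..T}. norm (V \<tau>) \<le> MV"
    and "real n * eps \<le> T"
  shows "norm (Ztil V Z0 eps n) \<le> norm Z0 + T * MV"
  by (rule order_trans[OF Ztil_norm_bound[OF assms(1,3,4)]]) (use mult_right_mono[OF assms(4,2)] in simp)

lemma Ztil_multiple_of_4_step:
  assumes "q \<ge> 1"
  shows "Ztil V Z0 eps (4 * q) = Ztil V Z0 eps (4 * q - 1) + eps *\<^sub>R V (real (4 * q) * eps)"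
proof -
  define p where "p = 4 * q - 1"
  have p: "4 * q = Suc p"
    using assms by (simp add: p_def)
  have "Ztil V Z0 eps (Suc p) = Ztil V Z0 eps p + eps *\<^sub>R V (real (Suc p) * eps)"
    by (simp only: Ztil.simps) (simp add: p[symmetric])
  then show ?thesis
    unfolding p_def[symmetric] unfolding p .
qed

text \<open>On each step the Euler scheme uses \<open>V\<close> frozen at a time at most \<open>3 eps\<close> away, so
  the local error is at most \<open>3 L eps\<^sup>2\<close>.\<close>
lemma Ztil_trajectory_error:
  assumes eps: "0 < eps" and lip: "L-lipschitz_on {0..T} V"
    and Zc_init: "Zc 0 = Z0" and Zc_ode: "\<forall>t\<ge>0. (Zc has_vector_derivative V t) (at t within {0..})"
  shows "real n * eps \<le> T \<Longrightarrow> norm (Ztil V Z0 eps n - Zc (real n * eps)) \<le> 3 * L * eps * (real n * eps)"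
proof (induction n)
  case 0
  then show ?case by (simp add: Zc_init)
next
  case (Suc n)
  define a where "a = real n * eps"
  define b where "b = real (Suc n) * eps"
  define c where "c = real (4 * (Suc n div 4)) * eps"
  have ab: "b = a + eps" by (simp add: a_def b_def algebra_simps)
  have cb: "c \<le> b" "b \<le> c + 3 * eps"
    using frozen_time_bounds[of eps n] eps by (simp_all add: b_def c_def)
  have bT: "b \<le> T" and a0: "0 \<le> a" and c0: "0 \<le> c"
    using Suc.prems eps by (simp_all add: a_def b_def c_def)
  let ?S = "{min a c..b}"
  have S: "?S \<subseteq> {0..T}" using a0 c0 bT by auto
  have "norm (Zc b - Zc a - (b - a) *\<^sub>R V c) \<le> norm (b - a) * (3 * L * eps)"
  proof (rule vector_differentiable_bound_linearization)
    show "(Zc has_vector_derivative V x) (at x within ?S)" if "x \<in> ?S" for x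
    proof -
      have "(Zc has_vector_derivative V x) (at x within {0..})"
        using Zc_ode S that by auto
      then show ?thesis
        by (rule has_vector_derivative_within_subset) (use S in auto)
    qed
    show "closed_segment a b \<subseteq> ?S"
      using ab eps by (auto simp: closed_segment_eq_real_ivl)
    show "c \<in> ?S" using cb by auto
    show "norm (V x - V c) \<le> 3 * L * eps" if "x \<in> ?S" for x
    proof -
      have "norm (V x - V c) \<le> L * norm (x - c)"
        using lipschitz_on_normD[OF lip] S that \<open>c \<in> ?S\<close> by blast
      also have "\<dots> \<le> L * (3 * eps)"
        using that cb ab eps lipschitz_on_nonneg[OF lip] by (intro mult_left_mono) auto
      finally show ?thesis by simp
    qed
  qed
  then have step: "norm (Zc b - Zc a - eps *\<^sub>R V c) \<le> 3 * L * eps * eps"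
    using eps by (simp add: ab mult_ac)
  have "real n * eps \<le> T"
    using bT ab eps unfolding a_def by linarith
  then have IH: "norm (Ztil V Z0 eps n - Zc a) \<le> 3 * L * eps * a"
    using Suc.IH by (simp add: a_def)
  have "Ztil V Z0 eps (Suc n) - Zc b = (Ztil V Z0 eps n - Zc a) - (Zc b - Zc a - eps *\<^sub>R V c)"
    by (simp add: c_def algebra_simps)
  also have "norm \<dots> \<le> 3 * L * eps * a + 3 * L * eps * eps"
    by (rule order_trans[OF norm_triangle_ineq4 add_mono[OF IH step]])
  also have "\<dots> = 3 * L * eps * b"
    by (simp add: ab algebra_simps)
  finally show ?case by (simp add: b_def)
qed

lemma C1_imp_lipschitz_on:
  fixes V :: "real \<Rightarrow> 'a::real_normed_vector"
  assumes "continuous_on {0..} V'" and "\<forall>t\<ge>0. (V has_vector_derivative V' t) (at t within {0..})"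
  obtains L where "L-lipschitz_on {0..T} V"
proof -
  have "continuous_on {0..T} V'"
    using continuous_on_subset[OF assms(1)] by auto
  then obtain B where B_nonneg: "0 \<le> B" and B: "\<And>t. t \<in> {0..T} \<Longrightarrow> norm (V' t) \<le> B"
    using continuous_on_compact_norm_bound[OF compact_Icc] by metis
  have "norm (V x - V y) \<le> B * norm (x - y)" if "x \<in> {0..T}" "y \<in> {0..T}" for x y
  proof (rule differentiable_bound[where f' = "\<lambda>t h. h *\<^sub>R V' t"])
    show "(V has_derivative (\<lambda>h. h *\<^sub>R V' t)) (at t within {0..T})" if "t \<in> {0..T}" for t
      using assms(2) that has_vector_derivative_within_subset[of V "V' t" t "{0..}" "{0..T}"]
      by (auto simp: has_vector_derivative_def)
    show "onorm (\<lambda>h. h *\<^sub>R V' t) \<le> B" if "t \<in> {0..T}" for t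
      using B[OF that] by (simp add: onorm_scaleR_left[OF bounded_linear_ident] onorm_id)
  qed (use that in auto)
  then have "B-lipschitz_on {0..T} V"
    using B_nonneg by (intro lipschitz_onI) (auto simp: dist_norm)
  then show ?thesis by (rule that)
qed

section \<open>Holomorphic functions of class \<open>C\<^sup>3\<close> on \<open>\<complex>\<^sup>2 \<times> \<real>\<close>\<close>

type_synonym spacetime = "(complex \<times> complex) \<times> real"

locale holomorphic_C3 =
  fixes f :: "spacetime \<Rightarrow> complex"
    and Df :: "spacetime \<Rightarrow> spacetime \<Rightarrow>\<^sub>L complex"
    and D2f :: "spacetime \<Rightarrow> spacetime \<Rightarrow>\<^sub>L (spacetime \<Rightarrow>\<^sub>L complex)"
    and D3f :: "spacetime \<Rightarrow> spacetime \<Rightarrow>\<^sub>L (spacetime \<Rightarrow>\<^sub>L (spacetime \<Rightarrow>\<^sub>L complex))"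
  assumes Df: "\<And>x. (f has_derivative blinfun_apply (Df x)) (at x)"
    and D2f: "\<And>x. (Df has_derivative blinfun_apply (D2f x)) (at x)"
    and D3f: "\<And>x. (D2f has_derivative blinfun_apply (D3f x)) (at x)"
    and D3f_continuous: "continuous_on UNIV D3f"
    and holo: "\<forall>t. holo2 (\<lambda>Z. f (Z, t))"
begin

lemma Df_space: "Df (Z, t) ((h1, h2), 0) = d1 f Z t * h1 + d2 f Z t * h2"
proof -
  obtain z1 z2 where Z: "Z = (z1, z2)" by fastforce
  obtain D1 D2 where D: "((\<lambda>Z. f (Z, t)) has_derivative (\<lambda>h. D1 * fst h + D2 * snd h)) (at (z1, z2))"
    using holo unfolding holo2_def by blast
  have "((\<lambda>Z. (Z, t)) has_derivative (\<lambda>h. (h, 0))) (at (z1, z2))"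
    by (auto intro!: derivative_eq_intros)
  from has_derivative_compose[OF this Df]
  have "((\<lambda>Z. f (Z, t)) has_derivative (\<lambda>h. Df ((z1, z2), t) (h, 0))) (at (z1, z2))"
    by (simp add: o_def)
  from has_derivative_unique[OF this D]
  have Df_eq: "Df ((z1, z2), t) (h, 0) = D1 * fst h + D2 * snd h" for h
    by (rule fun_cong)
  have "((\<lambda>w. (w, z2)) has_derivative (\<lambda>h. (h, 0))) (at z1)"
    by (auto intro!: derivative_eq_intros)
  from has_derivative_compose[OF this D]
  have "((\<lambda>w. f ((w, z2), t)) has_derivative (\<lambda>h. D1 * h)) (at z1)"
    by (simp add: o_def)
  then have "d1 f Z t = D1"
    unfolding d1_def Z by (intro DERIV_imp_deriv) (simp add: has_field_derivative_def)
  moreover have "((\<lambda>w. (z1, w)) has_derivative (\<lambda>h. (0, h))) (at z2)"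
    by (auto intro!: derivative_eq_intros)
  from has_derivative_compose[OF this D]
  have "((\<lambda>w. f ((z1, w), t)) has_derivative (\<lambda>h. D2 * h)) (at z2)"
    by (simp add: o_def)
  then have "d2 f Z t = D2"
    unfolding d2_def Z by (intro DERIV_imp_deriv) (simp add: has_field_derivative_def)
  ultimately show ?thesis by (simp add: Df_eq Z)
qed

lemma holomorphic_slices:
  shows "(\<lambda>w. f ((w, z2), t)) holomorphic_on UNIV" and "(\<lambda>w. f ((z1, w), t)) holomorphic_on UNIV"
proof -
  have "((\<lambda>w. f ((w, z2), t)) has_field_derivative d1 f (w, z2) t) (at w)" for w
  proof -
    have "((\<lambda>w. ((w, z2), t)) has_derivative (\<lambda>h. ((h, 0), 0))) (at w)"
      by (auto intro!: derivative_eq_intros)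
    from has_derivative_compose[OF this Df] show ?thesis
      by (simp add: o_def Df_space has_field_derivative_def)
  qed
  then show "(\<lambda>w. f ((w, z2), t)) holomorphic_on UNIV"
    unfolding holomorphic_on_def field_differentiable_def by (blast intro: has_field_derivative_at_within)
  have "((\<lambda>w. f ((z1, w), t)) has_field_derivative d2 f (z1, w) t) (at w)" for w
  proof -
    have "((\<lambda>w. ((z1, w), t)) has_derivative (\<lambda>h. ((0, h), 0))) (at w)"
      by (auto intro!: derivative_eq_intros)
    from has_derivative_compose[OF this Df] show ?thesis
      by (simp add: o_def Df_space has_field_derivative_def)
  qed
  then show "(\<lambda>w. f ((z1, w), t)) holomorphic_on UNIV"
    unfolding holomorphic_on_def field_differentiable_def by (blast intro: has_field_derivative_at_within)
qed

lemma dt_eq: "dt f Z t = Df (Z, t) ((0, 0), 1)"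
proof -
  have "(\<lambda>h. h *\<^sub>R ((0, 0), 1)) = (\<lambda>h::real. (0 :: complex \<times> complex, h))"
    by (simp add: fun_eq_iff zero_prod_def)
  then have "((\<lambda>\<tau>. (Z, \<tau>)) has_derivative (\<lambda>h. h *\<^sub>R ((0, 0), 1))) (at t)"
    using has_derivative_Pair[OF has_derivative_const has_derivative_ident] by metis
  from has_derivative_compose[OF this Df]
  have "((\<lambda>\<tau>. f (Z, \<tau>)) has_derivative (\<lambda>h. Df (Z, t) (h *\<^sub>R ((0, 0), 1)))) (at t)"
    by (simp add: o_def)
  then have "((\<lambda>\<tau>. f (Z, \<tau>)) has_vector_derivative Df (Z, t) ((0, 0), 1)) (at t)"
    by (simp only: has_vector_derivative_def blinfun.scaleR_right)
  then show ?thesis unfolding dt_def by (rule vector_derivative_at)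
qed

definition lap :: "spacetime \<Rightarrow> complex" where
  "lap x = D2f x ((1, 0), 0) ((1, 0), 0) + D2f x ((0, 1), 0) ((0, 1), 0)"

lemma laplacian_eq_lap: "d11 f Z t + d22 f Z t = lap (Z, t)"
proof -
  have "((\<lambda>w::complex. ((w, snd Z), t)) has_derivative (\<lambda>h. ((h, 0), 0))) (at w)" for w
    by (auto intro!: derivative_eq_intros)
  from deriv_deriv_comp_eq_blinfun[OF Df D2f this, of "fst Z"]
  have "d11 f Z t = D2f (Z, t) ((1, 0), 0) ((1, 0), 0)"
    using holomorphic_slices(1) by (simp add: d11_def o_def)
  moreover have "((\<lambda>w::complex. ((fst Z, w), t)) has_derivative (\<lambda>h. ((0, h), 0))) (at w)" for w
    by (auto intro!: derivative_eq_intros)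
  from deriv_deriv_comp_eq_blinfun[OF Df D2f this, of "snd Z"]
  have "d22 f Z t = D2f (Z, t) ((0, 1), 0) ((0, 1), 0)"
    using holomorphic_slices(2) by (simp add: d22_def o_def)
  ultimately show ?thesis by (simp add: lap_def)
qed

lemma Dyn_eq:
  "Dyn hbar m V f Z t = Df (Z, t) (V t, 1) - \<i> * complex_of_real (hbar / (2 * m)) * lap (Z, t)"
proof -
  have "(V t, 1::real) = ((fst (V t), snd (V t)), 0) + ((0, 0), 1)" by (simp add: prod_eq_iff)
  then have "Df (Z, t) (V t, 1) = Df (Z, t) ((fst (V t), snd (V t)), 0) + Df (Z, t) ((0, 0), 1)"
    by (simp only: blinfun.add_right)
  also have "\<dots> = dt f Z t + (fst (V t) * d1 f Z t + snd (V t) * d2 f Z t)"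
    using Df_space[of Z t "fst (V t)" "snd (V t)"] by (simp add: dt_eq mult.commute)
  finally show ?thesis by (simp add: Dyn_def laplacian_eq_lap)
qed

lemma lap_diff_bound: "cmod (lap x - lap y) \<le> 2 * norm (D2f x - D2f y)"
proof -
  have eval: "cmod (A k k) \<le> norm A" if "norm k = 1" for A :: "spacetime \<Rightarrow>\<^sub>L (spacetime \<Rightarrow>\<^sub>L complex)" and k
    using norm_blinfun[of "A k" k] norm_blinfun[of A k] that by (simp add: order_trans)
  have "lap x - lap y = (D2f x - D2f y) ((1, 0), 0) ((1, 0), 0) + (D2f x - D2f y) ((0, 1), 0) ((0, 1), 0)"
    unfolding lap_def blinfun.diff_left by simp
  also have "cmod \<dots> \<le> norm (D2f x - D2f y) + norm (D2f x - D2f y)"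
    by (rule order_trans[OF norm_triangle_ineq add_mono]; rule eval) (simp_all add: norm_Pair)
  finally show ?thesis by (simp only: mult_2)
qed

lemma quarter_sum_second_difference:
  assumes M1: "\<And>w. cmod (w - w1) \<le> cmod c + 1 \<Longrightarrow> cmod (f ((w, w2), \<tau>)) \<le> M"
    and M2: "\<And>w. cmod (w - w2) \<le> cmod c + 1 \<Longrightarrow> cmod (f ((w1, w), \<tau>)) \<le> M"
  shows "cmod (1/4 * (f ((w1 + c, w2), \<tau>) + f ((w1 - c, w2), \<tau>) + f ((w1, w2 + c), \<tau>)
           + f ((w1, w2 - c), \<tau>)) - f ((w1, w2), \<tau>) - c\<^sup>2 / 4 * lap ((w1, w2), \<tau>))
    \<le> 4 * (M + 1) * cmod c ^ 4"
proof -
  have H1: "cmod (f ((w1 + c, w2), \<tau>) + f ((w1 - c, w2), \<tau>) - 2 * f ((w1, w2), \<tau>)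
      - c\<^sup>2 * d11 f (w1, w2) \<tau>) \<le> 8 * (M + 1) * cmod c ^ 4"
    using entire_second_difference_bound[of "\<lambda>w. f ((w, w2), \<tau>)" w1 "cmod c" M c]
      holomorphic_slices(1) M1 by (simp add: d11_def)
  have H2: "cmod (f ((w1, w2 + c), \<tau>) + f ((w1, w2 - c), \<tau>) - 2 * f ((w1, w2), \<tau>)
      - c\<^sup>2 * d22 f (w1, w2) \<tau>) \<le> 8 * (M + 1) * cmod c ^ 4"
    using entire_second_difference_bound[of "\<lambda>w. f ((w1, w), \<tau>)" w2 "cmod c" M c]
      holomorphic_slices(2) M2 by (simp add: d22_def)
  have "1/4 * (f ((w1 + c, w2), \<tau>) + f ((w1 - c, w2), \<tau>) + f ((w1, w2 + c), \<tau>)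
           + f ((w1, w2 - c), \<tau>)) - f ((w1, w2), \<tau>) - c\<^sup>2 / 4 * lap ((w1, w2), \<tau>)
    = 1/4 * ((f ((w1 + c, w2), \<tau>) + f ((w1 - c, w2), \<tau>) - 2 * f ((w1, w2), \<tau>) - c\<^sup>2 * d11 f (w1, w2) \<tau>)
           + (f ((w1, w2 + c), \<tau>) + f ((w1, w2 - c), \<tau>) - 2 * f ((w1, w2), \<tau>) - c\<^sup>2 * d22 f (w1, w2) \<tau>))"
    unfolding laplacian_eq_lap[symmetric] by (simp add: field_simps)
  also have "cmod \<dots> \<le> 1/4 * (8 * (M + 1) * cmod c ^ 4 + 8 * (M + 1) * cmod c ^ 4)"
    using order_trans[OF norm_triangle_ineq add_mono[OF H1 H2]] by (simp add: norm_mult)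
  also have "\<dots> = 4 * (M + 1) * cmod c ^ 4"
    by (simp add: algebra_simps)
  finally show ?thesis .
qed

lemma backward_step_taylor_bound:
  assumes S: "convex S" and B2: "\<And>x. x \<in> S \<Longrightarrow> norm (D2f x) \<le> B2" and eps: "0 \<le> \<epsilon>"
    and x: "(W + \<epsilon> *\<^sub>R v, t) \<in> S" and y: "(W, t - \<epsilon>) \<in> S"
  shows "cmod (f (W, t - \<epsilon>) - f (W + \<epsilon> *\<^sub>R v, t) + complex_of_real \<epsilon> * Df (W + \<epsilon> *\<^sub>R v, t) (v, 1))
    \<le> \<epsilon>\<^sup>2 * (B2 * norm (v, 1::real) ^ 2)"
proof -
  have step: "(W, t - \<epsilon>) - (W + \<epsilon> *\<^sub>R v, t) = - \<epsilon> *\<^sub>R (v, 1)"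
    by (simp add: prod_eq_iff)
  have Df_step: "Df (W + \<epsilon> *\<^sub>R v, t) (- \<epsilon> *\<^sub>R (v, 1)) = - (complex_of_real \<epsilon> * Df (W + \<epsilon> *\<^sub>R v, t) (v, 1))"
    by (simp only: blinfun.scaleR_right scaleR_conv_of_real of_real_minus mult_minus_left)
  have norm_step: "norm (- \<epsilon> *\<^sub>R (v, 1::real)) = \<epsilon> * norm (v, 1::real)"
    using eps by (simp only: norm_scaleR abs_minus_cancel abs_of_nonneg)
  have "cmod (f (W, t - \<epsilon>) - f (W + \<epsilon> *\<^sub>R v, t) - Df (W + \<epsilon> *\<^sub>R v, t) ((W, t - \<epsilon>) - (W + \<epsilon> *\<^sub>R v, t)))
      \<le> B2 * norm ((W, t - \<epsilon>) - (W + \<epsilon> *\<^sub>R v, t)) ^ 2"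
    by (rule first_order_taylor_bound[OF S _ _ B2 x y]) (auto intro: has_derivative_at_withinI Df D2f)
  then show ?thesis
    unfolding step Df_step norm_step by (simp add: power_mult_distrib mult_ac)
qed

lemma one_step_estimate:
  assumes S: "convex S"
    and B2: "\<And>x. x \<in> S \<Longrightarrow> norm (D2f x) \<le> B2"
    and B3: "\<And>x y. x \<in> S \<Longrightarrow> y \<in> S \<Longrightarrow> norm (D2f x - D2f y) \<le> B3 * norm (x - y)"
    and M: "\<And>x. x \<in> S \<Longrightarrow> cmod (f x) \<le> M"
    and eps: "0 \<le> \<epsilon>" and c: "c\<^sup>2 = 4 * \<i> * complex_of_real \<kappa> * complex_of_real \<epsilon>"
    and Z: "Z = (w1, w2) + \<epsilon> *\<^sub>R v" and memZ: "(Z, t) \<in> S"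
    and disc1: "\<And>w. cmod (w - w1) \<le> cmod c + 1 \<Longrightarrow> ((w, w2), t - \<epsilon>) \<in> S"
    and disc2: "\<And>w. cmod (w - w2) \<le> cmod c + 1 \<Longrightarrow> ((w1, w), t - \<epsilon>) \<in> S"
  shows "cmod (f (Z, t) - 1/4 * (f ((w1 + c, w2), t - \<epsilon>) + f ((w1 - c, w2), t - \<epsilon>)
           + f ((w1, w2 + c), t - \<epsilon>) + f ((w1, w2 - c), t - \<epsilon>))
         - complex_of_real \<epsilon> * (Df (Z, t) (v, 1) - \<i> * complex_of_real \<kappa> * lap (Z, t)))
    \<le> \<epsilon>\<^sup>2 * (B2 * norm (v, 1::real) ^ 2 + 64 * (M + 1) * \<kappa>\<^sup>2 + 2 * \<bar>\<kappa>\<bar> * B3 * norm (v, 1::real))"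
proof -
  define x where "x = (Z, t)"
  define y where "y = ((w1, w2), t - \<epsilon>)"
  define Q where "Q = 1/4 * (f ((w1 + c, w2), t - \<epsilon>) + f ((w1 - c, w2), t - \<epsilon>)
           + f ((w1, w2 + c), t - \<epsilon>) + f ((w1, w2 - c), t - \<epsilon>))"
  have x: "x \<in> S" and y: "y \<in> S"
    using memZ disc1[of w1] by (simp_all add: x_def y_def)
  have taylor: "cmod (f y - f x + complex_of_real \<epsilon> * Df x (v, 1)) \<le> \<epsilon>\<^sup>2 * (B2 * norm (v, 1::real) ^ 2)"
    using backward_step_taylor_bound[OF S B2 eps, of "(w1, w2)" v t] x y by (simp add: x_def y_def Z)
  have "cmod c ^ 4 = (cmod (c\<^sup>2))\<^sup>2"
    by (simp add: norm_power)
  also have "\<dots> = 16 * \<kappa>\<^sup>2 * \<epsilon>\<^sup>2"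
    using eps by (simp add: c norm_mult power_mult_distrib)
  finally have "4 * (M + 1) * cmod c ^ 4 = \<epsilon>\<^sup>2 * (64 * (M + 1) * \<kappa>\<^sup>2)"
    by simp
  then have quarter: "cmod (Q - f y - c\<^sup>2 / 4 * lap y) \<le> \<epsilon>\<^sup>2 * (64 * (M + 1) * \<kappa>\<^sup>2)"
    using quarter_sum_second_difference[of w1 c w2 "t - \<epsilon>" M, OF M[OF disc1] M[OF disc2]]
    by (simp add: Q_def y_def)
  have "y - x = - \<epsilon> *\<^sub>R (v, 1)"
    by (simp add: x_def y_def Z prod_eq_iff)
  then have "norm (y - x) = \<epsilon> * norm (v, 1::real)"
    using eps by (simp only: norm_scaleR abs_minus_cancel abs_of_nonneg)
  then have "cmod (\<i> * complex_of_real \<kappa> * complex_of_real \<epsilon> * (lap y - lap x))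
      \<le> \<bar>\<kappa>\<bar> * \<epsilon> * (2 * (B3 * (\<epsilon> * norm (v, 1::real))))"
    using lap_diff_bound[of y x] B3[OF y x] eps by (simp add: norm_mult mult_left_mono)
  then have laplacian: "cmod (\<i> * complex_of_real \<kappa> * complex_of_real \<epsilon> * (lap y - lap x))
      \<le> \<epsilon>\<^sup>2 * (2 * \<bar>\<kappa>\<bar> * B3 * norm (v, 1::real))"
    by (simp add: power2_eq_square mult_ac)
  have "f x - Q - complex_of_real \<epsilon> * (Df x (v, 1) - \<i> * complex_of_real \<kappa> * lap x)
      = - ((f y - f x + complex_of_real \<epsilon> * Df x (v, 1)) + (Q - f y - c\<^sup>2 / 4 * lap y)
        + \<i> * complex_of_real \<kappa> * complex_of_real \<epsilon> * (lap y - lap x))"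
    by (simp add: c algebra_simps)
  also have "cmod \<dots> \<le> \<epsilon>\<^sup>2 * (B2 * norm (v, 1::real) ^ 2) + \<epsilon>\<^sup>2 * (64 * (M + 1) * \<kappa>\<^sup>2)
      + \<epsilon>\<^sup>2 * (2 * \<bar>\<kappa>\<bar> * B3 * norm (v, 1::real))"
    unfolding norm_minus_cancel
    by (rule norm_triangle_le[OF add_mono[OF norm_triangle_le[OF add_mono[OF taylor quarter]] laplacian]])
  finally show ?thesis
    by (simp add: x_def Q_def algebra_simps)
qed

lemma one_step_estimate_cball:
  assumes M: "\<And>x. x \<in> cball 0 R \<times> {0..T} \<Longrightarrow> cmod (f x) \<le> M"
    and B2: "\<And>x. x \<in> cball 0 R \<times> {0..T} \<Longrightarrow> norm (D2f x) \<le> B2"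
    and B3: "\<And>x y. x \<in> cball 0 R \<times> {0..T} \<Longrightarrow> y \<in> cball 0 R \<times> {0..T}
      \<Longrightarrow> norm (D2f x - D2f y) \<le> B3 * norm (x - y)"
    and eps: "0 \<le> \<epsilon>" and c: "c\<^sup>2 = 4 * \<i> * complex_of_real \<kappa> * complex_of_real \<epsilon>"
    and Z: "Z = W + \<epsilon> *\<^sub>R v" and ZR: "norm Z \<le> R" and WR: "norm W + cmod c + 1 \<le> R"
    and t: "\<epsilon> \<le> t" "t \<le> T"
  shows "cmod (f (Z, t) - 1/4 * (f ((fst W + c, snd W), t - \<epsilon>) + f ((fst W - c, snd W), t - \<epsilon>)
           + f ((fst W, snd W + c), t - \<epsilon>) + f ((fst W, snd W - c), t - \<epsilon>))
         - complex_of_real \<epsilon> * (Df (Z, t) (v, 1) - \<i> * complex_of_real \<kappa> * lap (Z, t)))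
    \<le> \<epsilon>\<^sup>2 * (B2 * norm (v, 1::real) ^ 2 + 64 * (M + 1) * \<kappa>\<^sup>2 + 2 * \<bar>\<kappa>\<bar> * B3 * norm (v, 1::real))"
proof (rule one_step_estimate[OF _ B2 B3 M eps c])
  show "convex (cball (0 :: complex \<times> complex) R \<times> {0..T})"
    by (intro convex_Times convex_cball convex_real_interval)
  show "Z = (fst W, snd W) + \<epsilon> *\<^sub>R v" by (simp add: Z)
  show "(Z, t) \<in> cball 0 R \<times> {0..T}" using ZR t eps by auto
  show "((w, snd W), t - \<epsilon>) \<in> cball 0 R \<times> {0..T}" if "cmod (w - fst W) \<le> cmod c + 1" for w
  proof -
    have "(w, snd W) = W + (w - fst W, 0)"
      by (simp add: prod_eq_iff)
    then have "norm (w, snd W) \<le> norm W + norm (w - fst W, 0 :: complex)"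
      by (metis norm_triangle_ineq)
    then show ?thesis using that WR t eps by (auto simp: norm_Pair)
  qed
  show "((fst W, w), t - \<epsilon>) \<in> cball 0 R \<times> {0..T}" if "cmod (w - snd W) \<le> cmod c + 1" for w
  proof -
    have "(fst W, w) = W + (0, w - snd W)"
      by (simp add: prod_eq_iff)
    then have "norm (fst W, w) \<le> norm W + norm (0 :: complex, w - snd W)"
      by (metis norm_triangle_ineq)
    then show ?thesis using that WR t eps by (auto simp: norm_Pair)
  qed
qed

lemma bounds_on_compact_convex:
  assumes "compact S" and "convex S"
  obtains M B2 B3 where "0 \<le> B2" and "0 \<le> B3" and "\<And>x. x \<in> S \<Longrightarrow> cmod (f x) \<le> M"
    and "\<And>x. x \<in> S \<Longrightarrow> norm (D2f x) \<le> B2"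
    and "\<And>x y. x \<in> S \<Longrightarrow> y \<in> S \<Longrightarrow> norm (Df x - Df y) \<le> B2 * norm (x - y)"
    and "\<And>x y. x \<in> S \<Longrightarrow> y \<in> S \<Longrightarrow> norm (D2f x - D2f y) \<le> B3 * norm (x - y)"
proof -
  have "continuous_on S f" and "continuous_on S D2f"
    using Df D3f by (auto intro!: continuous_at_imp_continuous_on has_derivative_continuous)
  then obtain M B2 where M: "\<And>x. x \<in> S \<Longrightarrow> cmod (f x) \<le> M"
      and B2: "0 \<le> B2" "\<And>x. x \<in> S \<Longrightarrow> norm (D2f x) \<le> B2"
    using continuous_on_compact_norm_bound[OF assms(1)] by metis
  obtain B3 where B3: "0 \<le> B3" "\<And>x. x \<in> S \<Longrightarrow> norm (D3f x) \<le> B3"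
    using continuous_on_compact_norm_bound[OF assms(1) continuous_on_subset[OF D3f_continuous]] by blast
  show ?thesis
  proof (rule that[OF B2(1) B3(1) M B2(2)])
    show "norm (Df x - Df y) \<le> B2 * norm (x - y)" if "x \<in> S" "y \<in> S" for x y
      by (rule bounded_derivative_lipschitz[OF assms(2) _ B2(2) that(2,1)])
        (auto intro: has_derivative_at_withinI D2f)
    show "norm (D2f x - D2f y) \<le> B3 * norm (x - y)" if "x \<in> S" "y \<in> S" for x y
      by (rule bounded_derivative_lipschitz[OF assms(2) _ B3(2) that(2,1)])
        (auto intro: has_derivative_at_withinI D3f)
  qed
qed

lemma Yeps_step_error:
  assumes hbar: "hbar > 0" and m: "m > 0" and s: "s \<in> {splus, sminus}"
    and V: "continuous_on {0..T} V"
  shows "\<exists>C. \<forall>eps q. 0 < eps \<and> eps \<le> 1 \<and> q \<ge> 1 \<and> 4 * real q * eps \<le> T \<longrightarrow>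
    norm (Yeps hbar m V Z0 s f eps (4 * q) - Yeps hbar m V Z0 s f eps (4 * q - 1)
      - complex_of_real eps * Dyn hbar m V f (Ztil V Z0 eps (4 * q)) (4 * real q * eps)) \<le> C * eps ^ 2"
proof -
  obtain MV where MV_nonneg: "0 \<le> MV" and MV: "\<forall>\<tau>\<in>{0..T}. norm (V \<tau>) \<le> MV"
    using continuous_on_compact_norm_bound[OF compact_Icc V] by metis
  define \<kappa> where "\<kappa> = hbar / (2 * m)"
  define R where "R = norm Z0 + T * MV + 2 * sqrt \<kappa> + 1"
  obtain M B2 B3 where B2_nonneg: "0 \<le> B2" and B3_nonneg: "0 \<le> B3"
    and M: "\<And>x. x \<in> cball 0 R \<times> {0..T} \<Longrightarrow> cmod (f x) \<le> M"
    and B2: "\<And>x. x \<in> cball 0 R \<times> {0..T} \<Longrightarrow> norm (D2f x) \<le> B2"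
    and B3: "\<And>x y. x \<in> cball 0 R \<times> {0..T} \<Longrightarrow> y \<in> cball 0 R \<times> {0..T}
      \<Longrightarrow> norm (D2f x - D2f y) \<le> B3 * norm (x - y)"
    by (rule bounds_on_compact_convex[of "cball 0 R \<times> {0..T}"]) (auto intro: compact_Times convex_Times)
  show ?thesis
  proof (intro exI[of _ "B2 * (MV + 1)\<^sup>2 + 64 * (M + 1) * \<kappa>\<^sup>2 + 2 * \<bar>\<kappa>\<bar> * B3 * (MV + 1)"] allI impI)
    fix eps q assume "0 < eps \<and> eps \<le> 1 \<and> q \<ge> 1 \<and> 4 * real q * eps \<le> T"
    then have eps: "0 < eps" "eps \<le> 1" and q: "q \<ge> 1" and tT: "4 * real q * eps \<le> T" by auto
    define t where "t = 4 * real q * eps"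
    define W where "W = Ztil V Z0 eps (4 * q - 1)"
    define c where "c = 2 * gam hbar m eps"
    have time: "real (4 * q - 1) * eps = t - eps" "eps \<le> t" "t \<le> T"
      using q eps tT by (simp_all add: t_def algebra_simps)
    have "norm (Ztil V Z0 eps (4 * q)) \<le> norm Z0 + T * MV"
      by (rule Ztil_norm_le[OF eps(1) MV_nonneg MV]) (use tT in simp)
    moreover have "0 \<le> sqrt \<kappa>"
      using hbar m by (simp add: \<kappa>_def)
    ultimately have ZR: "norm (Ztil V Z0 eps (4 * q)) \<le> R"
      unfolding R_def by linarith
    have "norm W \<le> norm Z0 + T * MV"
      unfolding W_def by (rule Ztil_norm_le[OF eps(1) MV_nonneg MV]) (use time eps in simp)
    moreover have "cmod c \<le> 2 * sqrt \<kappa>"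
      using norm_two_gam_le[OF hbar m _ eps(2)] eps by (simp add: c_def \<kappa>_def)
    ultimately have WR: "norm W + cmod c + 1 \<le> R"
      unfolding R_def by linarith
    have c_square: "c\<^sup>2 = 4 * \<i> * complex_of_real \<kappa> * complex_of_real eps"
      using gam_square[OF hbar m, of eps] eps by (simp add: c_def \<kappa>_def)
    have "norm (Yeps hbar m V Z0 s f eps (4 * q) - Yeps hbar m V Z0 s f eps (4 * q - 1)
      - complex_of_real eps * Dyn hbar m V f (Ztil V Z0 eps (4 * q)) t)
      \<le> eps\<^sup>2 * (B2 * norm (V t, 1::real) ^ 2 + 64 * (M + 1) * \<kappa>\<^sup>2 + 2 * \<bar>\<kappa>\<bar> * B3 * norm (V t, 1::real))"
      using one_step_estimate_cball[OF M B2 B3 less_imp_le[OF eps(1)] c_square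
          Ztil_multiple_of_4_step[OF q] ZR WR[unfolded W_def] time(2,3)]
      unfolding Yeps_multiple_of_4[OF s] Yeps_before_multiple_of_4[OF s q refl c_def] Dyn_eq
        \<kappa>_def[symmetric] time(1) t_def[symmetric]
      by (simp add: t_def)
    also have "\<dots> \<le> eps\<^sup>2 * (B2 * (MV + 1)\<^sup>2 + 64 * (M + 1) * \<kappa>\<^sup>2 + 2 * \<bar>\<kappa>\<bar> * B3 * (MV + 1))"
    proof -
      have "norm (V t, 1::real) \<le> MV + 1"
        using norm_Pair_le[of "V t" "1::real"] bspec[OF MV, of t] time eps by simp
      then have "B2 * norm (V t, 1::real) ^ 2 \<le> B2 * (MV + 1)\<^sup>2"
        and "2 * \<bar>\<kappa>\<bar> * B3 * norm (V t, 1::real) \<le> 2 * \<bar>\<kappa>\<bar> * B3 * (MV + 1)"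
        using B2_nonneg B3_nonneg by (auto intro!: mult_left_mono power_mono)
      then show ?thesis
        by (intro mult_left_mono) auto
    qed
    finally show "norm (Yeps hbar m V Z0 s f eps (4 * q) - Yeps hbar m V Z0 s f eps (4 * q - 1)
      - complex_of_real eps * Dyn hbar m V f (Ztil V Z0 eps (4 * q)) (4 * real q * eps))
      \<le> (B2 * (MV + 1)\<^sup>2 + 64 * (M + 1) * \<kappa>\<^sup>2 + 2 * \<bar>\<kappa>\<bar> * B3 * (MV + 1)) * eps ^ 2"
      by (simp add: t_def mult.commute)
  qed
qed

lemma Dyn_diff_bound:
  "cmod (Dyn hbar m V f Z1 t - Dyn hbar m V f Z2 t)
    \<le> norm (Df (Z1, t) - Df (Z2, t)) * norm (V t, 1::real)
      + 2 * \<bar>hbar / (2 * m)\<bar> * norm (D2f (Z1, t) - D2f (Z2, t))"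
proof -
  define \<kappa> where "\<kappa> = hbar / (2 * m)"
  have "Dyn hbar m V f Z1 t - Dyn hbar m V f Z2 t
      = (Df (Z1, t) - Df (Z2, t)) (V t, 1) - \<i> * complex_of_real \<kappa> * (lap (Z1, t) - lap (Z2, t))"
    unfolding Dyn_eq blinfun.diff_left \<kappa>_def by algebra
  also have "cmod \<dots> \<le> norm (Df (Z1, t) - Df (Z2, t)) * norm (V t, 1::real)
      + 2 * \<bar>\<kappa>\<bar> * norm (D2f (Z1, t) - D2f (Z2, t))"
  proof -
    have "cmod (\<i> * complex_of_real \<kappa> * (lap (Z1, t) - lap (Z2, t)))
        \<le> 2 * \<bar>\<kappa>\<bar> * norm (D2f (Z1, t) - D2f (Z2, t))"
      using mult_left_mono[OF lap_diff_bound[of "(Z1, t)" "(Z2, t)"], of "\<bar>\<kappa>\<bar>"]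
      unfolding norm_mult by (simp add: mult_ac)
    then show ?thesis
      by (rule order_trans[OF norm_triangle_ineq4 add_mono[OF norm_blinfun]])
  qed
  finally show ?thesis by (simp only: \<kappa>_def)
qed

lemma Dyn_lipschitz_on_cball:
  assumes MV: "\<forall>\<tau>\<in>{0..T}. norm (V \<tau>) \<le> MV"
  obtains K where "0 \<le> K" and "\<And>Z1 Z2 t. norm Z1 \<le> R \<Longrightarrow> norm Z2 \<le> R \<Longrightarrow> t \<in> {0..T}
    \<Longrightarrow> cmod (Dyn hbar m V f Z1 t - Dyn hbar m V f Z2 t) \<le> K * norm (Z1 - Z2)"
proof -
  obtain M :: real and B2 B3 where B2_nonneg: "0 \<le> B2" and B3_nonneg: "0 \<le> B3"
    and Df_lip: "\<And>x y. x \<in> cball 0 R \<times> {0..T} \<Longrightarrow> y \<in> cball 0 R \<times> {0..T}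
      \<Longrightarrow> norm (Df x - Df y) \<le> B2 * norm (x - y)"
    and D2f_lip: "\<And>x y. x \<in> cball 0 R \<times> {0..T} \<Longrightarrow> y \<in> cball 0 R \<times> {0..T}
      \<Longrightarrow> norm (D2f x - D2f y) \<le> B3 * norm (x - y)"
    by (rule bounds_on_compact_convex[of "cball 0 R \<times> {0..T}"]) (auto intro: compact_Times convex_Times)
  define K where "K = B2 * (\<bar>MV\<bar> + 1) + 2 * \<bar>hbar / (2 * m)\<bar> * B3"
  show ?thesis
  proof (rule that)
    show "0 \<le> K" using B2_nonneg B3_nonneg by (simp add: K_def)
    fix Z1 Z2 :: "complex \<times> complex" and t :: real
    assume "norm Z1 \<le> R" "norm Z2 \<le> R" "t \<in> {0..T}"
    then have mem: "(Z1, t) \<in> cball 0 R \<times> {0..T}" "(Z2, t) \<in> cball 0 R \<times> {0..T}" by auto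
    have "norm (V t, 1::real) \<le> \<bar>MV\<bar> + 1"
      using norm_Pair_le[of "V t" "1::real"] MV \<open>t \<in> {0..T}\<close> by fastforce
    then have "norm (Df (Z1, t) - Df (Z2, t)) * norm (V t, 1::real) \<le> B2 * norm (Z1 - Z2) * (\<bar>MV\<bar> + 1)"
      using Df_lip[OF mem] B2_nonneg by (intro mult_mono) auto
    moreover have "2 * \<bar>hbar / (2 * m)\<bar> * norm (D2f (Z1, t) - D2f (Z2, t))
        \<le> 2 * \<bar>hbar / (2 * m)\<bar> * (B3 * norm (Z1 - Z2))"
      using D2f_lip[OF mem] by (intro mult_left_mono) auto
    ultimately have "cmod (Dyn hbar m V f Z1 t - Dyn hbar m V f Z2 t)
        \<le> B2 * norm (Z1 - Z2) * (\<bar>MV\<bar> + 1) + 2 * \<bar>hbar / (2 * m)\<bar> * (B3 * norm (Z1 - Z2))"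
      using Dyn_diff_bound[of hbar m V Z1 t Z2] by linarith
    then show "cmod (Dyn hbar m V f Z1 t - Dyn hbar m V f Z2 t) \<le> K * norm (Z1 - Z2)"
      by (simp add: K_def algebra_simps)
  qed
qed

lemma Dyn_trajectory_error:
  assumes lip: "L-lipschitz_on {0..T} V" and Zc_init: "Zc 0 = Z0"
    and Zc_ode: "\<forall>t\<ge>0. (Zc has_vector_derivative V t) (at t within {0..})"
  shows "\<exists>C. \<forall>eps q. 0 < eps \<and> eps \<le> 1 \<and> 4 * real q * eps \<le> T \<longrightarrow>
    cmod (complex_of_real eps * (Dyn hbar m V f (Ztil V Z0 eps (4 * q)) (4 * real q * eps)
      - Dyn hbar m V f (Zc (4 * real q * eps)) (4 * real q * eps))) \<le> C * eps ^ 2"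
proof -
  obtain MV where MV_nonneg: "0 \<le> MV" and MV: "\<forall>\<tau>\<in>{0..T}. norm (V \<tau>) \<le> MV"
    using continuous_on_compact_norm_bound[OF compact_Icc lipschitz_on_continuous_on[OF lip]] by metis
  have L_nonneg: "0 \<le> L"
    using lipschitz_on_nonneg[OF lip] .
  obtain K where K_nonneg: "0 \<le> K" and K: "\<And>Z1 Z2 t. norm Z1 \<le> norm Z0 + T * MV + 3 * L * T
      \<Longrightarrow> norm Z2 \<le> norm Z0 + T * MV + 3 * L * T \<Longrightarrow> t \<in> {0..T}
      \<Longrightarrow> cmod (Dyn hbar m V f Z1 t - Dyn hbar m V f Z2 t) \<le> K * norm (Z1 - Z2)"
    using Dyn_lipschitz_on_cball[OF MV] by blast
  show ?thesis
  proof (intro exI[of _ "K * (3 * L * T)"] allI impI)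
    fix eps q assume "0 < eps \<and> eps \<le> 1 \<and> 4 * real q * eps \<le> T"
    then have eps: "0 < eps" "eps \<le> 1" and tT: "real (4 * q) * eps \<le> T" by auto
    define t where "t = real (4 * q) * eps"
    define Z where "Z = Ztil V Z0 eps (4 * q)"
    have t: "t \<in> {0..T}"
      using eps tT by (simp add: t_def)
    have "norm (Z - Zc t) \<le> 3 * L * eps * t"
      unfolding Z_def t_def by (rule Ztil_trajectory_error[OF eps(1) lip Zc_init Zc_ode tT])
    also have "\<dots> \<le> 3 * L * eps * T"
      using L_nonneg eps t by (intro mult_left_mono) auto
    finally have err: "norm (Z - Zc t) \<le> 3 * L * eps * T" .
    have ZR: "norm Z \<le> norm Z0 + T * MV"
      unfolding Z_def by (rule Ztil_norm_le[OF eps(1) MV_nonneg MV tT])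
    have "3 * L * eps * T \<le> 3 * L * T"
      using mult_left_le[of eps "3 * L * T"] eps L_nonneg t by (simp add: mult_ac)
    then have "norm (Zc t) \<le> norm Z0 + T * MV + 3 * L * T"
      using ZR err norm_triangle_sub[of "Zc t" Z] by (simp add: norm_minus_commute)
    moreover have "norm Z \<le> norm Z0 + T * MV + 3 * L * T"
      using ZR mult_nonneg_nonneg[OF L_nonneg, of T] t by simp
    ultimately have "cmod (Dyn hbar m V f Z t - Dyn hbar m V f (Zc t) t) \<le> K * norm (Z - Zc t)"
      using K t by blast
    also have "\<dots> \<le> K * (3 * L * eps * T)"
      using err K_nonneg by (rule mult_left_mono)
    finally have "cmod (Dyn hbar m V f Z t - Dyn hbar m V f (Zc t) t) \<le> K * (3 * L * eps * T)" .
    then show "cmod (complex_of_real eps * (Dyn hbar m V f (Ztil V Z0 eps (4 * q)) (4 * real q * eps)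
      - Dyn hbar m V f (Zc (4 * real q * eps)) (4 * real q * eps))) \<le> K * (3 * L * T) * eps ^ 2"
      using eps by (simp add: Z_def t_def norm_mult power2_eq_square mult_left_mono mult_ac)
  qed
qed

lemma Yeps_step_error_classical:
  assumes hbar: "hbar > 0" and m: "m > 0" and s: "s \<in> {splus, sminus}"
    and lip: "L-lipschitz_on {0..T} V" and Zc_init: "Zc 0 = Z0"
    and Zc_ode: "\<forall>t\<ge>0. (Zc has_vector_derivative V t) (at t within {0..})"
  shows "\<exists>C. \<forall>eps q. 0 < eps \<and> eps \<le> 1 \<and> q \<ge> 1 \<and> 4 * real q * eps \<le> T \<longrightarrow>
    norm (Yeps hbar m V Z0 s f eps (4 * q) - Yeps hbar m V Z0 s f eps (4 * q - 1)
      - complex_of_real eps * Dyn hbar m V f (Zc (4 * real q * eps)) (4 * real q * eps)) \<le> C * eps ^ 2"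
proof -
  let ?Yd = "\<lambda>eps q. Yeps hbar m V Z0 s f eps (4 * q) - Yeps hbar m V Z0 s f eps (4 * q - 1)"
  obtain C1 where C1: "\<forall>eps q. 0 < eps \<and> eps \<le> 1 \<and> q \<ge> 1 \<and> 4 * real q * eps \<le> T \<longrightarrow>
      norm (?Yd eps q - complex_of_real eps * Dyn hbar m V f (Ztil V Z0 eps (4 * q)) (4 * real q * eps))
        \<le> C1 * eps ^ 2"
    using Yeps_step_error[OF hbar m s lipschitz_on_continuous_on[OF lip]] by blast
  obtain C2 where C2: "\<forall>eps q. 0 < eps \<and> eps \<le> 1 \<and> 4 * real q * eps \<le> T \<longrightarrow>
      cmod (complex_of_real eps * (Dyn hbar m V f (Ztil V Z0 eps (4 * q)) (4 * real q * eps)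
        - Dyn hbar m V f (Zc (4 * real q * eps)) (4 * real q * eps))) \<le> C2 * eps ^ 2"
    using Dyn_trajectory_error[OF lip Zc_init Zc_ode] by blast
  show ?thesis
  proof (intro exI[of _ "C1 + C2"] allI impI)
    fix eps q
    let ?x = "Dyn hbar m V f (Ztil V Z0 eps (4 * q)) (4 * real q * eps)"
    let ?y = "Dyn hbar m V f (Zc (4 * real q * eps)) (4 * real q * eps)"
    assume "0 < eps \<and> eps \<le> 1 \<and> q \<ge> 1 \<and> 4 * real q * eps \<le> T"
    then have "norm (?Yd eps q - complex_of_real eps * ?x) \<le> C1 * eps ^ 2"
      and "cmod (complex_of_real eps * (?x - ?y)) \<le> C2 * eps ^ 2"
      using C1 C2 by blast+
    then have "norm ((?Yd eps q - complex_of_real eps * ?x) + complex_of_real eps * (?x - ?y))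
        \<le> C1 * eps ^ 2 + C2 * eps ^ 2"
      by (intro norm_triangle_le add_mono)
    then show "norm (?Yd eps q - complex_of_real eps * ?y) \<le> (C1 + C2) * eps ^ 2"
      by (simp add: algebra_simps)
  qed
qed

end

theorem mainTheorem4:
  fixes hbar m :: real
    and f :: "(complex \<times> complex) \<times> real \<Rightarrow> complex"
    and V :: "real \<Rightarrow> complex \<times> complex"
    and Z0 :: "complex \<times> complex"
    and s :: "real \<times> real \<Rightarrow> real \<times> real"
    and Zc :: "real \<Rightarrow> complex \<times> complex"
  assumes hbar: "hbar > 0" and mpos: "m > 0"
    and holo: "\<forall>t. holo2 (\<lambda>Z. f (Z, t))"
    and smooth: "C3 f"
    and V_C1: "\<exists>V'. continuous_on {0..} V' \<and>
                  (\<forall>t\<ge>0. (V has_vector_derivative V' t) (at t within {0..}))"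
    and s_choice: "s \<in> {splus, sminus}"
    and Zc_init: "Zc 0 = Z0"
    and Zc_ode: "\<forall>t\<ge>0. (Zc has_vector_derivative V t) (at t within {0..})"
  shows "(\<forall>T>0. \<exists>C. \<forall>eps q. 0 < eps \<and> eps \<le> 1 \<and> q \<ge> 1 \<and> 4 * real q * eps \<le> T \<longrightarrow>
            norm (Yeps hbar m V Z0 s f eps (4 * q) - Yeps hbar m V Z0 s f eps (4 * q - 1)
                  - complex_of_real eps * Dyn hbar m V f (Ztil V Z0 eps (4 * q)) (4 * real q * eps))
              \<le> C * eps ^ 2)
       \<and> (\<forall>T>0. \<exists>C. \<forall>eps q. 0 < eps \<and> eps \<le> 1 \<and> q \<ge> 1 \<and> 4 * real q * eps \<le> T \<longrightarrow>
            norm (Yeps hbar m V Z0 s f eps (4 * q) - Yeps hbar m V Z0 s f eps (4 * q - 1)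
                  - complex_of_real eps * Dyn hbar m V f (Zc (4 * real q * eps)) (4 * real q * eps))
              \<le> C * eps ^ 2)"
proof -
  obtain Df D2f D3f where "\<And>x. (f has_derivative blinfun_apply (Df x)) (at x)"
    and "\<And>x. (Df has_derivative blinfun_apply (D2f x)) (at x)"
    and "\<And>x. (D2f has_derivative blinfun_apply (D3f x)) (at x)" and "continuous_on UNIV D3f"
    using smooth unfolding C3_def by blast
  then interpret holomorphic_C3 f Df D2f D3f
    using holo by unfold_locales
  obtain V' where "continuous_on {0..} V'" "\<forall>t\<ge>0. (V has_vector_derivative V' t) (at t within {0..})"
    using V_C1 by blast
  then have lip: "\<exists>L. L-lipschitz_on {0..T} V" for T
    using C1_imp_lipschitz_on by metis
  show ?thesis
    using lip Yeps_step_error[OF hbar mpos s_choice lipschitz_on_continuous_on]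
      Yeps_step_error_classical[OF hbar mpos s_choice _ Zc_init Zc_ode]
    by blast
qed

end
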